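(* Let $V:\mathbb{R}^d\to\mathbb{R}$ be $\mathtt{m}$-convex ($\mathtt{m}\ge0$) and continuously differentiable, with $\|\nabla V(x)-\nabla V(y)\|\le M\|x-y\|$ for all $x,y$, where $M>0$. Assume there exists $x^*\in\arg\min_{\mathbb{R}^d}V$. Then for any $\bar\gamma<2/(M+\mathtt{m})$, $\gamma\in(0,\bar\gamma]$ and $x\in\mathbb{R}^d$, $$\|x-\gamma\nabla V(x)\|^2\le(1-\gamma\varpi)\|x\|^2+\gamma\{(2/(\mathtt{m}+M)-\bar\gamma)^{-1}+4\varpi\}\|x^*\|^2,$$ with $\varpi=\mathtt{m}M/(\mathtt{m}+M)$.
   Context: $V$ is $\mathtt{m}$-convex if $V(tx+(1-t)y)\le tV(x)+(1-t)V(y)-(\mathtt{m}/2)t(1-t)\|x-y\|^2$ for all $x,y\in\mathbb{R}^d$, $t\in[0,1]$; $\|\cdot\|$ Euclidean. *)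

theory Defs
  imports "HOL-Analysis.Analysis"
begin

definition m_convex :: "real \<Rightarrow> ('a::real_normed_vector \<Rightarrow> real) \<Rightarrow> bool" where
  "m_convex m V \<longleftrightarrow> (\<forall>x y. \<forall>t\<in>{0..1}.
     V (t *\<^sub>R x + (1 - t) *\<^sub>R y) \<le> t * V x + (1 - t) * V y - (m / 2) * t * (1 - t) * (norm (x - y))\<^sup>2)"

end

theory Submission
  imports Defs
begin

text \<open>
  Let \<omega> = m M / (m + M) and G the gradient of V. The function V - m/2 |.|^2 is convex and,
  by the Lipschitz bound on G, lies below its tangents plus (M - m)/2 |.|^2, so its gradient
  is cocoercive. Unfolded, this is Nesterov's inequality
  |G x - G y|^2 + m M |x - y|^2 <= (m + M) <G x - G y, x - y>.
  Take y = xstar, where G vanishes, and expand |x - \<gamma> G x|^2: the term \<gamma>^2 |G x|^2 is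
  absorbed since \<gamma> <= 2/(m + M) - C with C = 2/(m + M) - gbar, the cross term
  <G x, xstar> is bounded by Young's inequality with weight C, and
  |x - xstar|^2 >= |x|^2/2 - |xstar|^2.
\<close>

lemma power2_norm_convex_combination:
  fixes x y :: "'a::real_inner"
  shows "(norm ((1 - t) *\<^sub>R x + t *\<^sub>R y))\<^sup>2
    = (1 - t) * (norm x)\<^sup>2 + t * (norm y)\<^sup>2 - (1 - t) * t * (norm (x - y))\<^sup>2"
  by (simp add: power2_norm_eq_inner inner_simps inner_commute algebra_simps)

lemma m_convex_imp_convex_on:
  fixes V :: "'a::real_inner \<Rightarrow> real"
  assumes "m_convex m V"
  shows "convex_on UNIV (\<lambda>x. V x - m / 2 * (norm x)\<^sup>2)"
proof (rule convex_onI)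
  fix t :: real and x y :: 'a
  assume "0 < t" "t < 1"
  have "V (s *\<^sub>R x + (1 - s) *\<^sub>R y)
      \<le> s * V x + (1 - s) * V y - m / 2 * s * (1 - s) * (norm (x - y))\<^sup>2"
    if "0 \<le> s" "s \<le> 1" for s
    using assms that unfolding m_convex_def by auto
  from this[of "1 - t"] \<open>0 < t\<close> \<open>t < 1\<close> have "V ((1 - t) *\<^sub>R x + t *\<^sub>R y)
      \<le> (1 - t) * V x + t * V y - m / 2 * (1 - t) * t * (norm (x - y))\<^sup>2"
    by simp
  then show "V ((1 - t) *\<^sub>R x + t *\<^sub>R y) - m / 2 * (norm ((1 - t) *\<^sub>R x + t *\<^sub>R y))\<^sup>2
      \<le> (1 - t) * (V x - m / 2 * (norm x)\<^sup>2) + t * (V y - m / 2 * (norm y)\<^sup>2)"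
    unfolding power2_norm_convex_combination by (simp add: field_simps)
qed simp

lemma has_real_derivative_along_line:
  fixes f :: "'a::real_inner \<Rightarrow> real"
  assumes "(f has_derivative (\<lambda>h. g \<bullet> h)) (at (w + t *\<^sub>R v))"
  shows "((\<lambda>s. f (w + s *\<^sub>R v)) has_real_derivative (g \<bullet> v)) (at t)"
proof -
  have "((\<lambda>s. w + s *\<^sub>R v) has_derivative (\<lambda>s. s *\<^sub>R v)) (at t)"
    by (auto intro!: derivative_eq_intros)
  from has_derivative_compose[OF this assms]
  show ?thesis
    unfolding has_field_derivative_def by (simp add: mult_commute_abs)
qed

lemma convex_on_gradient_inequality:
  fixes f :: "'a::real_inner \<Rightarrow> real"
  assumes convex: "convex_on UNIV f"
    and deriv: "(f has_derivative (\<lambda>h. g \<bullet> h)) (at w)"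
  shows "f w + g \<bullet> (z - w) \<le> f z"
proof -
  define q where "q s = f (w + s *\<^sub>R (z - w))" for s :: real
  have "convex_on UNIV q"
  proof (rule convex_onI)
    fix t a b :: real
    assume "0 < t" "t < 1"
    have "w + ((1 - t) *\<^sub>R a + t *\<^sub>R b) *\<^sub>R (z - w)
        = (1 - t) *\<^sub>R (w + a *\<^sub>R (z - w)) + t *\<^sub>R (w + b *\<^sub>R (z - w))"
      by (simp add: algebra_simps)
    then show "q ((1 - t) *\<^sub>R a + t *\<^sub>R b) \<le> (1 - t) * q a + t * q b"
      unfolding q_def using convex_onD[OF convex, of t] \<open>0 < t\<close> \<open>t < 1\<close> by simp
  qed simp
  moreover have "(q has_real_derivative g \<bullet> (z - w)) (at 0)"
    unfolding q_def using has_real_derivative_along_line[of f g w 0] deriv by simp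
  ultimately have "g \<bullet> (z - w) * (1 - 0) \<le> q 1 - q 0"
    by (intro convex_on_imp_above_tangent[where A = UNIV]) auto
  then show ?thesis unfolding q_def by simp
qed

lemma lipschitz_gradient_quadratic_upper_bound:
  fixes V :: "'a::real_inner \<Rightarrow> real"
  assumes grad: "\<And>y. (V has_derivative (\<lambda>h. G y \<bullet> h)) (at y)"
    and lip: "\<And>y z. norm (G y - G z) \<le> M * norm (y - z)"
  shows "V z \<le> V w + G w \<bullet> (z - w) + M / 2 * (norm (z - w))\<^sup>2"
proof -
  define v where "v = z - w"
  define g where "g t = V (w + t *\<^sub>R v) - t * (G w \<bullet> v) - M / 2 * t\<^sup>2 * (norm v)\<^sup>2" for t
  have "g 1 \<le> g 0"
  proof (rule DERIV_nonpos_imp_nonincreasing[of 0 1 g])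
    fix t :: real
    assume t: "0 \<le> t" "t \<le> 1"
    have "(g has_real_derivative (G (w + t *\<^sub>R v) - G w) \<bullet> v - M * t * (norm v)\<^sup>2) (at t)"
      unfolding g_def inner_diff_left
      by (auto intro!: derivative_eq_intros has_real_derivative_along_line grad)
    moreover have "(G (w + t *\<^sub>R v) - G w) \<bullet> v \<le> M * t * (norm v)\<^sup>2"
    proof -
      have "(G (w + t *\<^sub>R v) - G w) \<bullet> v \<le> norm (G (w + t *\<^sub>R v) - G w) * norm v"
        by (rule norm_cauchy_schwarz)
      also have "\<dots> \<le> M * norm (t *\<^sub>R v) * norm v"
        using lip[of "w + t *\<^sub>R v" w] by (simp add: mult_right_mono)
      also have "\<dots> = M * t * (norm v)\<^sup>2"
        using t by (simp add: power2_eq_square)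
      finally show ?thesis .
    qed
    ultimately show "\<exists>y. (g has_real_derivative y) (at t) \<and> y \<le> 0"
      by force
  qed simp
  then show ?thesis
    unfolding g_def v_def by simp
qed

lemma gradient_cocoercive:
  fixes f :: "'a::real_inner \<Rightarrow> real"
  assumes lower: "\<And>z w. f w + G w \<bullet> (z - w) \<le> f z"
    and upper: "\<And>z w. f z \<le> f w + G w \<bullet> (z - w) + L / 2 * (norm (z - w))\<^sup>2"
  shows "(norm (G a - G b))\<^sup>2 \<le> L * ((G a - G b) \<bullet> (a - b))"
proof -
  define D where "D = G a - G b"
  \<comment> \<open>Compare f at a - t D and at b + t D with both first-order bounds.\<close>
  have bound: "(2 * t - L * t\<^sup>2) * (norm D)\<^sup>2 \<le> D \<bullet> (a - b)" for t
  proof -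
    have "f b + G b \<bullet> ((a - t *\<^sub>R D) - b) \<le> f (a - t *\<^sub>R D)"
      and "f (a - t *\<^sub>R D) \<le> f a + G a \<bullet> (- t *\<^sub>R D) + L / 2 * (norm (t *\<^sub>R D))\<^sup>2"
      and "f a + G a \<bullet> ((b + t *\<^sub>R D) - a) \<le> f (b + t *\<^sub>R D)"
      and "f (b + t *\<^sub>R D) \<le> f b + G b \<bullet> (t *\<^sub>R D) + L / 2 * (norm (t *\<^sub>R D))\<^sup>2"
      using lower upper[of "a - t *\<^sub>R D" a] upper[of "b + t *\<^sub>R D" b] by simp_all
    moreover have "(norm (t *\<^sub>R D))\<^sup>2 = t\<^sup>2 * (norm D)\<^sup>2"
      by (simp add: power_mult_distrib)
    moreover have "G b \<bullet> ((a - t *\<^sub>R D) - b) - G a \<bullet> (- t *\<^sub>R D)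
        + G a \<bullet> ((b + t *\<^sub>R D) - a) - G b \<bullet> (t *\<^sub>R D)
        = 2 * t * (norm D)\<^sup>2 - D \<bullet> (a - b)"
      unfolding D_def by (simp add: inner_simps power2_norm_eq_inner algebra_simps)
    ultimately show ?thesis
      by (simp add: algebra_simps)
  qed
  show ?thesis
  proof (cases "L > 0")
    case True
    from bound[of "1 / L"] True have "(norm D)\<^sup>2 / L \<le> D \<bullet> (a - b)"
      by (simp add: power2_eq_square field_simps)
    with True show ?thesis
      unfolding D_def by (simp add: divide_le_eq mult.commute)
  next
    case False
    have "D = 0"
    proof (rule ccontr)
      assume "D \<noteq> 0"
      then have pos: "(norm D)\<^sup>2 > 0" by simp
      define t where "t = (\<bar>D \<bullet> (a - b)\<bar> + 1) / (norm D)\<^sup>2"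
      have "t > 0"
        unfolding t_def using pos by simp
      then have "2 * t * (norm D)\<^sup>2 \<le> (2 * t - L * t\<^sup>2) * (norm D)\<^sup>2"
        using False pos by (intro mult_right_mono) (auto simp: mult_nonpos_nonneg)
      also have "\<dots> \<le> D \<bullet> (a - b)"
        by (rule bound)
      finally have "2 * (\<bar>D \<bullet> (a - b)\<bar> + 1) \<le> D \<bullet> (a - b)"
        unfolding t_def using pos by simp
      then show False by simp
    qed
    then show ?thesis
      unfolding D_def by simp
  qed
qed

lemma m_convex_lipschitz_gradient_monotone:
  fixes V :: "'a::real_inner \<Rightarrow> real"
  assumes mconv: "m_convex m V"
    and grad: "\<And>y. (V has_derivative (\<lambda>h. G y \<bullet> h)) (at y)"
    and lip: "\<And>y z. norm (G y - G z) \<le> M * norm (y - z)"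
  shows "(norm (G x - G y))\<^sup>2 + m * M * (norm (x - y))\<^sup>2 \<le> (m + M) * ((G x - G y) \<bullet> (x - y))"
proof -
  define f where "f = (\<lambda>z. V z - m / 2 * (norm z)\<^sup>2)"
  define F where "F z = G z - m *\<^sub>R z" for z
  have convex: "convex_on UNIV f"
    unfolding f_def by (rule m_convex_imp_convex_on[OF mconv])
  have "(f has_derivative (\<lambda>h. F y \<bullet> h)) (at y)" for y
    unfolding f_def F_def power2_norm_eq_inner
    by (auto intro!: derivative_eq_intros grad simp: inner_simps inner_commute)
  then have lower: "f w + F w \<bullet> (z - w) \<le> f z" for z w
    by (rule convex_on_gradient_inequality[OF convex])
  have upper: "f z \<le> f w + F w \<bullet> (z - w) + (M - m) / 2 * (norm (z - w))\<^sup>2" for z w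
    using lipschitz_gradient_quadratic_upper_bound[OF grad lip, of z w]
    unfolding f_def F_def
    by (simp add: power2_norm_eq_inner inner_simps inner_commute field_simps)
  have "(norm (F x - F y))\<^sup>2 \<le> (M - m) * ((F x - F y) \<bullet> (x - y))"
    using lower upper by (rule gradient_cocoercive)
  moreover have "F x - F y = (G x - G y) - m *\<^sub>R (x - y)"
    unfolding F_def by (simp add: algebra_simps)
  ultimately show ?thesis
    by (simp add: power2_norm_eq_inner inner_simps inner_commute algebra_simps)
qed

lemma norm_gradient_step_le:
  fixes x y g :: "'a::real_inner"
  assumes monotone: "(norm g)\<^sup>2 + m * M * (norm (x - y))\<^sup>2 \<le> (m + M) * (g \<bullet> (x - y))"
    and m: "m \<ge> 0" and M: "M > 0"
    and gbar: "gbar < 2 / (m + M)" and \<gamma>: "0 < \<gamma>" "\<gamma> \<le> gbar"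
  shows "(norm (x - \<gamma> *\<^sub>R g))\<^sup>2
    \<le> (1 - \<gamma> * (m * M / (m + M))) * (norm x)\<^sup>2
       + \<gamma> * (inverse (2 / (m + M) - gbar) + 4 * (m * M / (m + M))) * (norm y)\<^sup>2"
proof -
  define \<omega> where "\<omega> = m * M / (m + M)"
  define C where "C = 2 / (m + M) - gbar"
  have "\<omega> \<ge> 0" and "C > 0"
    using m M gbar unfolding \<omega>_def C_def by simp_all
  have expand: "(norm (x - \<gamma> *\<^sub>R g))\<^sup>2
      = (norm x)\<^sup>2 - 2 * \<gamma> * (g \<bullet> (x - y)) - 2 * \<gamma> * (g \<bullet> y) + \<gamma>\<^sup>2 * (norm g)\<^sup>2"
    unfolding power2_norm_eq_inner
    by (simp add: inner_simps inner_commute algebra_simps power2_eq_square)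
  have inner_lower: "2 / (m + M) * (norm g)\<^sup>2 + 2 * \<omega> * (norm (x - y))\<^sup>2 \<le> 2 * (g \<bullet> (x - y))"
  proof -
    have "2 / (m + M) * (norm g)\<^sup>2 + 2 * \<omega> * (norm (x - y))\<^sup>2
        = 2 / (m + M) * ((norm g)\<^sup>2 + m * M * (norm (x - y))\<^sup>2)"
      unfolding \<omega>_def by (simp add: algebra_simps)
    also have "\<dots> \<le> 2 / (m + M) * ((m + M) * (g \<bullet> (x - y)))"
      using monotone m M by (intro mult_left_mono) auto
    also have "\<dots> = 2 * (g \<bullet> (x - y))"
      using m M by simp
    finally show ?thesis .
  qed
  have step: "\<gamma>\<^sup>2 * (norm g)\<^sup>2 \<le> \<gamma> * (2 / (m + M) - C) * (norm g)\<^sup>2"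
    using \<gamma> unfolding C_def by (simp add: power2_eq_square mult_right_mono)
  have young: "- 2 * (g \<bullet> y) - C * (norm g)\<^sup>2 \<le> (norm y)\<^sup>2 / C"
  proof -
    have "0 \<le> (norm (C *\<^sub>R g + y))\<^sup>2 / C"
      using \<open>C > 0\<close> by simp
    also have "\<dots> = C * (norm g)\<^sup>2 + 2 * (g \<bullet> y) + (norm y)\<^sup>2 / C"
      using \<open>C > 0\<close> unfolding power2_norm_eq_inner
      by (simp add: inner_simps inner_commute field_simps power2_eq_square)
    finally show ?thesis by simp
  qed
  have norm_x_split: "(norm x)\<^sup>2 \<le> 2 * (norm (x - y))\<^sup>2 + 2 * (norm y)\<^sup>2"
  proof -
    have "0 \<le> (norm (x - 2 *\<^sub>R y))\<^sup>2" by simp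
    then show ?thesis
      by (simp add: power2_norm_eq_inner inner_simps inner_commute algebra_simps)
  qed
  have "(norm (x - \<gamma> *\<^sub>R g))\<^sup>2
      \<le> (norm x)\<^sup>2 - 2 * \<gamma> * \<omega> * (norm (x - y))\<^sup>2 + \<gamma> * (- 2 * (g \<bullet> y) - C * (norm g)\<^sup>2)"
    unfolding expand using mult_left_mono[OF inner_lower, of \<gamma>] step \<gamma>
    by (simp add: algebra_simps)
  also have "\<dots> \<le> (1 - \<gamma> * \<omega>) * (norm x)\<^sup>2 + \<gamma> * (1 / C + 2 * \<omega>) * (norm y)\<^sup>2"
    using mult_left_mono[OF norm_x_split, of "\<gamma> * \<omega>"] mult_left_mono[OF young, of \<gamma>] \<gamma> \<open>\<omega> \<ge> 0\<close>
    by (simp add: algebra_simps)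
  also have "\<dots> \<le> (1 - \<gamma> * \<omega>) * (norm x)\<^sup>2 + \<gamma> * (1 / C + 4 * \<omega>) * (norm y)\<^sup>2"
    using \<gamma> \<open>\<omega> \<ge> 0\<close> by (intro add_left_mono mult_right_mono mult_left_mono) auto
  finally show ?thesis
    unfolding \<omega>_def C_def by (simp add: inverse_eq_divide)
qed

theorem lemma12:
  fixes V :: "real ^ 'd \<Rightarrow> real" and gradV :: "real ^ 'd \<Rightarrow> real ^ 'd"
    and m M gbar \<gamma> :: real and xstar x :: "real ^ 'd"
  assumes mconv: "m_convex m V" and m_nonneg: "m \<ge> 0"
    and grad: "\<And>y. (V has_derivative (\<lambda>h. gradV y \<bullet> h)) (at y)"
    and grad_cont: "continuous_on UNIV gradV"
    and lip: "\<And>y z. norm (gradV y - gradV z) \<le> M * norm (y - z)"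
    and M_pos: "M > 0"
    and argmin: "\<And>y. V xstar \<le> V y"
    and gbar: "gbar < 2 / (M + m)"
    and gam: "0 < \<gamma>" "\<gamma> \<le> gbar"
  shows "(norm (x - \<gamma> *\<^sub>R gradV x))\<^sup>2
    \<le> (1 - \<gamma> * (m * M / (m + M))) * (norm x)\<^sup>2
       + \<gamma> * (inverse (2 / (m + M) - gbar) + 4 * (m * M / (m + M))) * (norm xstar)\<^sup>2"
proof -
  have "(\<lambda>h. gradV xstar \<bullet> h) = (\<lambda>h. 0)"
    using argmin by (intro differential_zero_maxmin[of xstar UNIV V] grad) auto
  then have "gradV xstar = 0"
    by (metis inner_eq_zero_iff)
  then have "(norm (gradV x))\<^sup>2 + m * M * (norm (x - xstar))\<^sup>2 \<le> (m + M) * (gradV x \<bullet> (x - xstar))"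
    using m_convex_lipschitz_gradient_monotone[OF mconv grad lip, of x xstar] by simp
  moreover have "gbar < 2 / (m + M)"
    using gbar by (simp add: add.commute)
  ultimately show ?thesis
    using norm_gradient_step_le m_nonneg M_pos gam by blast
qed

end
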